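(* Let $A$ be a finite-dimensional algebra over a field $k$ and let $F^\bullet \in \mathcal{L}_A$. Then for every $k\in\mathbb{Z}$ the cohomology module $\mathrm{H}^k(F^\bullet)$ lies in ${}^\perp\mathcal{P}_A$, i.e. $\operatorname{Hom}_A(\mathrm{H}^k(F^\bullet), Z)=0$ for every projective-injective right $A$-module $Z$.
   Context: Conventions: $k$ is a field, $A$ a finite-dimensional $k$-algebra without semisimple direct summands; $\operatorname{mod}A$ is the category of finitely generated right $A$-modules, $\operatorname{proj}A$ the full subcategory of projectives; $(-)^\ast:=\operatorname{Hom}_A(-,A)$. $\mathcal{P}_A$ is the full subcategory of projective-injective modules and ${}^\perp\mathcal{P}_A$ the full subcategory of $X\in\operatorname{mod}A$ with $\operatorname{Hom}_A(X,Z)=0$ for all $Z\in\mathcal{P}_A$. $\mathrm{K}(\operatorname{proj}A)$ denotes the unbounded homotopy category of complexes of finitely generated projective right $A$-modules, written as cochain complexes $F^\bullet=(F^k,d^k:F^k\to F^{k+1})$ with cohomology $\mathrm{H}^k(F^\bullet)=\operatorname{Ker}d^k/\operatorname{Im}d^{k-1}$. Applying $(-)^\ast$ componentwise yields a complex of projective left modules written as a chain complex $F^\ast_\bullet$ with $F^\ast_k:=(F^k)^\ast$ and differential $(d^k)^\ast:F^\ast_{k+1}\to F^\ast_k$; its homology is $\mathrm{H}_k(F^\ast_\bullet)=\operatorname{Ker}((d^{k-1})^\ast)/\operatorname{Im}((d^k)^\ast)$. Kato's category: $\mathcal{L}_A=\{F^\bullet\in\mathrm{K}(\operatorname{proj}A)\mid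 \mathrm{H}^k(F^\bullet)=0 \text{ for all } k<0,\ \mathrm{H}_k(F^\ast_\bullet)=0\text{ for all }k\ge 0\}$. *)

theory Defs
  imports Main
begin

definition k_algebra :: "('k::field \<Rightarrow> 'a::ring_1) \<Rightarrow> bool" where
  "k_algebra \<phi> \<longleftrightarrow>
     (\<forall>c e. \<phi> (c + e) = \<phi> c + \<phi> e) \<and>
     (\<forall>c e. \<phi> (c * e) = \<phi> c * \<phi> e) \<and>
     \<phi> 1 = 1 \<and>
     (\<forall>c a. \<phi> c * a = a * \<phi> c)"

definition fd_algebra :: "('k::field \<Rightarrow> 'a::ring_1) \<Rightarrow> bool" where
  "fd_algebra \<phi> \<longleftrightarrow> k_algebra \<phi> \<and>
     (\<exists>S. finite S \<and> (\<forall>x::'a. \<exists>c. x = (\<Sum>s\<in>S. \<phi> (c s) * s)))"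

definition right_ideal :: "'a::ring_1 set \<Rightarrow> bool" where
  "right_ideal I \<longleftrightarrow> 0 \<in> I \<and> (\<forall>x\<in>I. \<forall>y\<in>I. x + y \<in> I) \<and> (\<forall>x\<in>I. \<forall>a. x * a \<in> I)"

text \<open>A semisimple algebra direct summand of A is eA for a nonzero central idempotent e
  such that the ring eA (with identity e) is semisimple, i.e. every right ideal of eA is
  a direct summand of eA.\<close>
definition semisimple_summand :: "'a::ring_1 \<Rightarrow> bool" where
  "semisimple_summand e \<longleftrightarrow> e \<noteq> 0 \<and> e * e = e \<and> (\<forall>a. e * a = a * e) \<and>
     (\<forall>I. right_ideal I \<and> I \<subseteq> range ((*) e) \<longrightarrow>
        (\<exists>J. right_ideal J \<and> J \<subseteq> range ((*) e) \<and> I \<inter> J = {0} \<and>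
             (\<forall>x\<in>range ((*) e). \<exists>i\<in>I. \<exists>j\<in>J. x = i + j)))"

definition no_semisimple_summand :: "'a::ring_1 itself \<Rightarrow> bool" where
  "no_semisimple_summand _ \<longleftrightarrow> (\<forall>e::'a. \<not> semisimple_summand e)"

record ('a, 'm) rmod =
  mcarrier :: "'m set"
  madd :: "'m \<Rightarrow> 'm \<Rightarrow> 'm"
  mzero :: "'m"
  msmul :: "'m \<Rightarrow> 'a \<Rightarrow> 'm"

definition rmodule :: "('a::ring_1, 'm) rmod \<Rightarrow> bool" where
  "rmodule M \<longleftrightarrow>
     mzero M \<in> mcarrier M \<and>
     (\<forall>x\<in>mcarrier M. \<forall>y\<in>mcarrier M. madd M x y \<in> mcarrier M) \<and>
     (\<forall>x\<in>mcarrier M. \<forall>a. msmul M x a \<in> mcarrier M) \<and>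
     (\<forall>x\<in>mcarrier M. \<forall>y\<in>mcarrier M. \<forall>z\<in>mcarrier M.
         madd M (madd M x y) z = madd M x (madd M y z)) \<and>
     (\<forall>x\<in>mcarrier M. \<forall>y\<in>mcarrier M. madd M x y = madd M y x) \<and>
     (\<forall>x\<in>mcarrier M. madd M x (mzero M) = x) \<and>
     (\<forall>x\<in>mcarrier M. \<exists>y\<in>mcarrier M. madd M x y = mzero M) \<and>
     (\<forall>x\<in>mcarrier M. msmul M x 1 = x) \<and>
     (\<forall>x\<in>mcarrier M. \<forall>a b. msmul M (msmul M x a) b = msmul M x (a * b)) \<and>
     (\<forall>x\<in>mcarrier M. \<forall>y\<in>mcarrier M. \<forall>a.
         msmul M (madd M x y) a = madd M (msmul M x a) (msmul M y a)) \<and>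
     (\<forall>x\<in>mcarrier M. \<forall>a b. msmul M x (a + b) = madd M (msmul M x a) (msmul M x b))"

fun lincomb :: "('a, 'm) rmod \<Rightarrow> 'm list \<Rightarrow> 'a list \<Rightarrow> 'm" where
  "lincomb M (g # gs) (a # as) = madd M (msmul M g a) (lincomb M gs as)"
| "lincomb M _ _ = mzero M"

definition fin_gen :: "('a, 'm) rmod \<Rightarrow> bool" where
  "fin_gen M \<longleftrightarrow> (\<exists>gs. set gs \<subseteq> mcarrier M \<and>
      (\<forall>x\<in>mcarrier M. \<exists>as. length as = length gs \<and> x = lincomb M gs as))"

definition modA :: "('a::ring_1, 'm) rmod \<Rightarrow> bool" where
  "modA M \<longleftrightarrow> rmodule M \<and> fin_gen M"

definition rhom :: "('a, 'm) rmod \<Rightarrow> ('a, 'n) rmod \<Rightarrow> ('m \<Rightarrow> 'n) \<Rightarrow> bool" where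
  "rhom M N f \<longleftrightarrow> f ` mcarrier M \<subseteq> mcarrier N \<and>
     (\<forall>x\<in>mcarrier M. \<forall>y\<in>mcarrier M. f (madd M x y) = madd N (f x) (f y)) \<and>
     (\<forall>x\<in>mcarrier M. \<forall>a. f (msmul M x a) = msmul N (f x) a)"

definition ideal_mod :: "'a::ring_1 set \<Rightarrow> ('a, 'a) rmod" where
  "ideal_mod I = \<lparr>mcarrier = I, madd = (+), mzero = 0, msmul = (*)\<rparr>"

definition regA :: "('a::ring_1, 'a) rmod" where
  "regA = ideal_mod UNIV"

definition free_mod :: "nat \<Rightarrow> ('a::ring_1, nat \<Rightarrow> 'a) rmod" where
  "free_mod n = \<lparr>mcarrier = {v. \<forall>i\<ge>n. v i = 0},
                 madd = (\<lambda>v w i. v i + w i), mzero = (\<lambda>i. 0),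
                 msmul = (\<lambda>v a i. v i * a)\<rparr>"

text \<open>Projective finitely generated module: direct summand of some A^n.\<close>
definition projective :: "('a::ring_1, 'm) rmod \<Rightarrow> bool" where
  "projective M \<longleftrightarrow> (\<exists>n i p. rhom M (free_mod n) i \<and> rhom (free_mod n) M p \<and>
       (\<forall>x\<in>mcarrier M. p (i x) = x))"

text \<open>Injective module (Baer's criterion).\<close>
definition injective :: "('a::ring_1, 'm) rmod \<Rightarrow> bool" where
  "injective M \<longleftrightarrow> (\<forall>I g. right_ideal I \<and> rhom (ideal_mod I) M g \<longrightarrow>
       (\<exists>h. rhom regA M h \<and> (\<forall>x\<in>I. h x = g x)))"

definition proj_inj :: "('a::ring_1, 'm) rmod \<Rightarrow> bool" where
  "proj_inj M \<longleftrightarrow> modA M \<and> projective M \<and> injective M"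

definition proj_complex :: "(int \<Rightarrow> ('a::ring_1, 'f) rmod) \<Rightarrow> (int \<Rightarrow> 'f \<Rightarrow> 'f) \<Rightarrow> bool" where
  "proj_complex F d \<longleftrightarrow>
     (\<forall>k. modA (F k) \<and> projective (F k) \<and> rhom (F k) (F (k + 1)) (d k)) \<and>
     (\<forall>k. \<forall>x\<in>mcarrier (F k). d (k + 1) (d k x) = mzero (F (k + 2)))"

definition coset :: "('a, 'm) rmod \<Rightarrow> 'm set \<Rightarrow> 'm \<Rightarrow> 'm set" where
  "coset M N x = {madd M x n | n. n \<in> N}"

definition quot_mod :: "('a, 'm) rmod \<Rightarrow> 'm set \<Rightarrow> 'm set \<Rightarrow> ('a, 'm set) rmod" where
  "quot_mod M K N = \<lparr>mcarrier = coset M N ` K,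
      madd = (\<lambda>X Y. {madd M x y | x y. x \<in> X \<and> y \<in> Y}),
      mzero = coset M N (mzero M),
      msmul = (\<lambda>X a. {madd M (msmul M x a) n | x n. x \<in> X \<and> n \<in> N})\<rparr>"

definition cycles :: "(int \<Rightarrow> ('a, 'f) rmod) \<Rightarrow> (int \<Rightarrow> 'f \<Rightarrow> 'f) \<Rightarrow> int \<Rightarrow> 'f set" where
  "cycles F d k = {x \<in> mcarrier (F k). d k x = mzero (F (k + 1))}"

definition boundaries :: "(int \<Rightarrow> ('a, 'f) rmod) \<Rightarrow> (int \<Rightarrow> 'f \<Rightarrow> 'f) \<Rightarrow> int \<Rightarrow> 'f set" where
  "boundaries F d k = d (k - 1) ` mcarrier (F (k - 1))"

definition cohom :: "(int \<Rightarrow> ('a, 'f) rmod) \<Rightarrow> (int \<Rightarrow> 'f \<Rightarrow> 'f) \<Rightarrow> int \<Rightarrow> ('a, 'f set) rmod" where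
  "cohom F d k = quot_mod (F k) (cycles F d k) (boundaries F d k)"

text \<open>H_k(F^*) = 0, i.e. Ker((d^(k-1))^*) \<subseteq> Im((d^k)^*) inside (F^k)^* = Hom_A(F^k, A).
  Elements of Hom_A(F^k,A) are compared on the carrier of F^k.\<close>
definition dual_homology_vanishes :: "(int \<Rightarrow> ('a::ring_1, 'f) rmod) \<Rightarrow> (int \<Rightarrow> 'f \<Rightarrow> 'f) \<Rightarrow> int \<Rightarrow> bool" where
  "dual_homology_vanishes F d k \<longleftrightarrow>
     (\<forall>\<phi>. rhom (F k) regA \<phi> \<and> (\<forall>x\<in>mcarrier (F (k - 1)). \<phi> (d (k - 1) x) = 0) \<longrightarrow>
        (\<exists>\<psi>. rhom (F (k + 1)) regA \<psi> \<and> (\<forall>x\<in>mcarrier (F k). \<phi> x = \<psi> (d k x))))"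

text \<open>Kato's category L_A.\<close>
definition in_L :: "(int \<Rightarrow> ('a::ring_1, 'f) rmod) \<Rightarrow> (int \<Rightarrow> 'f \<Rightarrow> 'f) \<Rightarrow> bool" where
  "in_L F d \<longleftrightarrow> proj_complex F d \<and>
     (\<forall>k<0. cycles F d k \<subseteq> boundaries F d k) \<and>
     (\<forall>k\<ge>0. dual_homology_vanishes F d k)"

text \<open>X in perp(P_A): Hom_A(X,Z) = 0 for all Z in P_A (Z of arbitrary carrier type).\<close>
definition hom_zero :: "('a, 'm) rmod \<Rightarrow> ('a, 'n) rmod \<Rightarrow> bool" where
  "hom_zero M N \<longleftrightarrow> (\<forall>f. rhom M N f \<longrightarrow> (\<forall>x\<in>mcarrier M. f x = mzero N))"

end

(*
  A map H^n(F) -> Z is a map on the cycles of F^n that kills the boundaries.  For n < 0 every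
  cycle is a boundary.  For n >= 0, injectivity of Z extends the map to f : F^n -> Z (Baer's
  criterion gives injectivity relative to the free modules A^m by induction on m, hence relative
  to their summands), and f kills the image of d^(n-1).  As Z is a summand of some A^m, the
  vanishing of the n-th homology of the dual complex, applied to each coordinate of f, writes
  f = psi o d^n, which is zero on the cycles.
*)
theory Submission
  imports Defs "HOL-Algebra.Group"
begin

definition additive_group :: "('a, 'm) rmod \<Rightarrow> 'm monoid" where
  "additive_group M = \<lparr>carrier = mcarrier M, mult = madd M, one = mzero M\<rparr>"

locale right_module =
  fixes M :: "('a::ring_1, 'm) rmod"
  assumes rmodule: "rmodule M"
begin

lemma zero_closed [simp]: "mzero M \<in> mcarrier M"
  using rmodule unfolding rmodule_def by auto

lemma add_closed [simp]: "x \<in> mcarrier M \<Longrightarrow> y \<in> mcarrier M \<Longrightarrow> madd M x y \<in> mcarrier M"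
  using rmodule unfolding rmodule_def by auto

lemma smul_closed [simp]: "x \<in> mcarrier M \<Longrightarrow> msmul M x a \<in> mcarrier M"
  using rmodule unfolding rmodule_def by auto

lemma add_assoc:
  "x \<in> mcarrier M \<Longrightarrow> y \<in> mcarrier M \<Longrightarrow> z \<in> mcarrier M \<Longrightarrow>
    madd M (madd M x y) z = madd M x (madd M y z)"
  using rmodule unfolding rmodule_def by auto

lemma add_commute: "x \<in> mcarrier M \<Longrightarrow> y \<in> mcarrier M \<Longrightarrow> madd M x y = madd M y x"
  using rmodule unfolding rmodule_def by auto

lemma add_zero_right [simp]: "x \<in> mcarrier M \<Longrightarrow> madd M x (mzero M) = x"
  using rmodule unfolding rmodule_def by auto

lemma add_zero_left [simp]: "x \<in> mcarrier M \<Longrightarrow> madd M (mzero M) x = x"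
  using add_commute[of "mzero M" x] by simp

lemma add_inverse_exists: "x \<in> mcarrier M \<Longrightarrow> \<exists>y\<in>mcarrier M. madd M x y = mzero M"
  using rmodule unfolding rmodule_def by fast

lemma smul_one [simp]: "x \<in> mcarrier M \<Longrightarrow> msmul M x 1 = x"
  using rmodule unfolding rmodule_def by auto

lemma smul_smul: "x \<in> mcarrier M \<Longrightarrow> msmul M (msmul M x a) b = msmul M x (a * b)"
  using rmodule unfolding rmodule_def by auto

lemma smul_add_left:
  "x \<in> mcarrier M \<Longrightarrow> y \<in> mcarrier M \<Longrightarrow>
    msmul M (madd M x y) a = madd M (msmul M x a) (msmul M y a)"
  using rmodule unfolding rmodule_def by auto

lemma smul_add_right:
  "x \<in> mcarrier M \<Longrightarrow> msmul M x (a + b) = madd M (msmul M x a) (msmul M x b)"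
  using rmodule unfolding rmodule_def by auto

lemma additive_group_simps [simp]:
  "carrier (additive_group M) = mcarrier M"
  "mult (additive_group M) = madd M"
  "one (additive_group M) = mzero M"
  by (simp_all add: additive_group_def)

lemma comm_group_additive_group: "comm_group (additive_group M)"
proof (rule comm_groupI)
  fix x assume "x \<in> carrier (additive_group M)"
  then show "\<exists>y\<in>carrier (additive_group M). y \<otimes>\<^bsub>additive_group M\<^esub> x = \<one>\<^bsub>additive_group M\<^esub>"
    using add_inverse_exists add_commute by fastforce
next
  fix x assume "x \<in> carrier (additive_group M)"
  then show "\<one>\<^bsub>additive_group M\<^esub> \<otimes>\<^bsub>additive_group M\<^esub> x = x"
    by simp
qed (auto simp: add_assoc intro: add_commute)

sublocale additive: comm_group "additive_group M"
  by (rule comm_group_additive_group)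

lemma add_self_eq_zero: "x \<in> mcarrier M \<Longrightarrow> madd M x x = x \<Longrightarrow> x = mzero M"
  using additive.l_cancel_one[of x x] by simp

lemma smul_zero_right [simp]: "x \<in> mcarrier M \<Longrightarrow> msmul M x 0 = mzero M"
  using add_self_eq_zero[of "msmul M x 0"] smul_add_right[of x 0 0] by simp

lemma smul_zero_left [simp]: "msmul M (mzero M) a = mzero M"
  using smul_smul[of "mzero M" 0 a] by simp

lemma smul_minus_one: "x \<in> mcarrier M \<Longrightarrow> msmul M x (-1) = inv\<^bsub>additive_group M\<^esub> x"
  using additive.inv_equality[of "msmul M x (-1)" x] smul_add_right[of x "-1" 1] by simp

lemma add_neg_self [simp]: "x \<in> mcarrier M \<Longrightarrow> madd M x (msmul M x (-1)) = mzero M"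
  using additive.r_inv[of x] by (simp add: smul_minus_one)

lemma add_neg_cancel_left:
  "x \<in> mcarrier M \<Longrightarrow> y \<in> mcarrier M \<Longrightarrow> madd M x (madd M y (msmul M x (-1))) = y"
  using additive.m_lcomm[of x y "inv\<^bsub>additive_group M\<^esub> x"] additive.r_inv[of x]
  by (simp add: smul_minus_one additive.inv_closed[simplified])

lemma add_add_swap:
  "\<lbrakk>w \<in> mcarrier M; x \<in> mcarrier M; y \<in> mcarrier M; z \<in> mcarrier M\<rbrakk> \<Longrightarrow>
    madd M (madd M w x) (madd M y z) = madd M (madd M w y) (madd M x z)"
  using additive.m_ac by simp

lemma diff_eq_zero_iff:
  "x \<in> mcarrier M \<Longrightarrow> y \<in> mcarrier M \<Longrightarrow> madd M x (msmul M y (-1)) = mzero M \<longleftrightarrow> x = y"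
proof
  assume "x \<in> mcarrier M" "y \<in> mcarrier M" "madd M x (msmul M y (-1)) = mzero M"
  then show "x = y"
    using additive.inv_equality[of x "inv\<^bsub>additive_group M\<^esub> y"] additive.inv_comm[of x]
    by (simp add: smul_minus_one additive.inv_closed[simplified])
qed simp

lemma smul_neg_commute: "x \<in> mcarrier M \<Longrightarrow> msmul M (msmul M x (-1)) a = msmul M (msmul M x a) (-1)"
  by (simp add: smul_smul)

end

definition submodule :: "('a, 'm) rmod \<Rightarrow> 'm set \<Rightarrow> bool" where
  "submodule M U \<longleftrightarrow> U \<subseteq> mcarrier M \<and> mzero M \<in> U \<and> (\<forall>x\<in>U. \<forall>y\<in>U. madd M x y \<in> U) \<and>
     (\<forall>x\<in>U. \<forall>a. msmul M x a \<in> U)"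

definition linear_on :: "('a, 'm) rmod \<Rightarrow> ('a, 'n) rmod \<Rightarrow> 'm set \<Rightarrow> ('m \<Rightarrow> 'n) \<Rightarrow> bool" where
  "linear_on M N U f \<longleftrightarrow> (\<forall>x\<in>U. f x \<in> mcarrier N) \<and>
     (\<forall>x\<in>U. \<forall>y\<in>U. f (madd M x y) = madd N (f x) (f y)) \<and>
     (\<forall>x\<in>U. \<forall>a. f (msmul M x a) = msmul N (f x) a)"

lemma submoduleD:
  assumes "submodule M U"
  shows "U \<subseteq> mcarrier M" "mzero M \<in> U" "\<And>x y. x \<in> U \<Longrightarrow> y \<in> U \<Longrightarrow> madd M x y \<in> U"
    "\<And>x a. x \<in> U \<Longrightarrow> msmul M x a \<in> U"
  using assms unfolding submodule_def by auto

lemma linear_onD: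
  assumes "linear_on M N U f"
  shows "\<And>x. x \<in> U \<Longrightarrow> f x \<in> mcarrier N"
    "\<And>x y. x \<in> U \<Longrightarrow> y \<in> U \<Longrightarrow> f (madd M x y) = madd N (f x) (f y)"
    "\<And>x a. x \<in> U \<Longrightarrow> f (msmul M x a) = msmul N (f x) a"
  using assms unfolding linear_on_def by auto

lemma rhom_iff_linear_on: "rhom M N f \<longleftrightarrow> linear_on M N (mcarrier M) f"
  unfolding rhom_def linear_on_def by auto

lemma linear_on_subset: "linear_on M N U f \<Longrightarrow> V \<subseteq> U \<Longrightarrow> linear_on M N V f"
  unfolding linear_on_def by blast

lemma linear_on_comp:
  assumes "linear_on L M U f" "f ` U \<subseteq> V" "linear_on M N V g"
  shows "linear_on L N U (\<lambda>x. g (f x))"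
  using assms unfolding linear_on_def by (auto simp: image_subset_iff)

lemma rhom_comp: "rhom L M f \<Longrightarrow> rhom M N g \<Longrightarrow> rhom L N (\<lambda>x. g (f x))"
  unfolding rhom_def by (auto simp: image_subset_iff)

lemma linear_on_zero:
  assumes M: "right_module M" and N: "right_module N" and f: "linear_on M N U f" and U: "mzero M \<in> U"
  shows "f (mzero M) = mzero N"
proof -
  have "madd N (f (mzero M)) (f (mzero M)) = f (mzero M)"
    using linear_onD(2)[OF f U U] right_module.add_zero_right[OF M] right_module.zero_closed[OF M]
    by simp
  then show ?thesis using right_module.add_self_eq_zero[OF N] linear_onD(1)[OF f U] by blast
qed

lemma (in right_module) linear_on_add:
  assumes "linear_on L M U f" "linear_on L M U g"
  shows "linear_on L M U (\<lambda>x. madd M (f x) (g x))"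
  using linear_onD[OF assms(1)] linear_onD[OF assms(2)]
  by (auto simp: linear_on_def add_add_swap smul_add_left)

lemma (in right_module) linear_on_neg:
  assumes "linear_on L M U f"
  shows "linear_on L M U (\<lambda>x. msmul M (f x) (-1))"
  using linear_onD[OF assms] by (auto simp: linear_on_def smul_add_left smul_neg_commute)

lemma submodule_image:
  assumes M: "right_module M" and N: "right_module N" and U: "submodule M U" and f: "linear_on M N U f"
  shows "submodule N (f ` U)"
proof -
  note U = submoduleD[OF U] and f' = linear_onD[OF f]
  have "madd N y z \<in> f ` U" if y: "y \<in> f ` U" and z: "z \<in> f ` U" for y z
  proof -
    obtain u w where u: "u \<in> U" and w: "w \<in> U" and "y = f u" "z = f w" using y z by blast
    then have "madd N y z = f (madd M u w)" using f'(2) by simp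
    then show ?thesis using U(3)[OF u w] by blast
  qed
  moreover have "msmul N y a \<in> f ` U" if y: "y \<in> f ` U" for y a
  proof -
    obtain u where u: "u \<in> U" and "y = f u" using y by blast
    then have "msmul N y a = f (msmul M u a)" using f'(3) by simp
    then show ?thesis using U(4)[OF u] by blast
  qed
  moreover have "mzero N \<in> f ` U"
    by (rule image_eqI[where f = f, OF linear_on_zero[OF M N f U(2), symmetric] U(2)])
  ultimately show ?thesis using f'(1) unfolding submodule_def by blast
qed

lemma submodule_carrier: "right_module M \<Longrightarrow> submodule M (mcarrier M)"
  by (auto simp: submodule_def right_module.zero_closed right_module.add_closed right_module.smul_closed)

lemma submodule_kernel:
  assumes "right_module M" "right_module N" "rhom M N f"
  shows "submodule M {x \<in> mcarrier M. f x = mzero N}"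
  using assms right_module.add_zero_right[OF assms(2)] right_module.smul_zero_left[OF assms(2)]
    linear_on_zero[OF assms(1,2) assms(3)[unfolded rhom_iff_linear_on]]
  by (auto simp: submodule_def rhom_def right_module.zero_closed right_module.add_closed
      right_module.smul_closed)

lemma linear_on_factor:
  assumes L: "right_module L" and N: "right_module N" and P: "right_module P"
    and U: "submodule L U" and f: "linear_on L N U f" and p: "linear_on L P U p"
    and ker: "\<And>u. u \<in> U \<Longrightarrow> p u = mzero P \<Longrightarrow> f u = mzero N"
  shows "\<exists>\<phi>. linear_on P N (p ` U) \<phi> \<and> (\<forall>u\<in>U. f u = \<phi> (p u))"
proof -
  interpret L: right_module L by (fact L)
  interpret N: right_module N by (fact N)
  interpret P: right_module P by (fact P)
  note U = submoduleD[OF U] and f = linear_onD[OF f] and p = linear_onD[OF p]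
  have fiber: "f u = f w" if "u \<in> U" "w \<in> U" "p u = p w" for u w
  proof -
    let ?e = "madd L u (msmul L w (-1))"
    have "?e \<in> U" using that U by blast
    moreover have "p ?e = mzero P" using that U p by (auto simp: subset_iff)
    ultimately have "f ?e = mzero N" by (rule ker)
    then have "madd N (f u) (msmul N (f w) (-1)) = mzero N" using that U f by simp
    then show ?thesis using that f N.diff_eq_zero_iff by blast
  qed
  define \<phi> where "\<phi> y = f (SOME u. u \<in> U \<and> p u = y)" for y
  have \<phi>: "\<phi> (p u) = f u" if "u \<in> U" for u
  proof -
    have "(SOME w. w \<in> U \<and> p w = p u) \<in> U \<and> p (SOME w. w \<in> U \<and> p w = p u) = p u"
      using someI[of "\<lambda>w. w \<in> U \<and> p w = p u"] that by blast
    then show ?thesis unfolding \<phi>_def using fiber that by blast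
  qed
  have "linear_on P N (p ` U) \<phi>"
    unfolding linear_on_def
  proof (intro conjI ballI allI)
    fix y assume "y \<in> p ` U"
    then show "\<phi> y \<in> mcarrier N" using \<phi> f by auto
  next
    fix y z assume "y \<in> p ` U" "z \<in> p ` U"
    then obtain u w where "u \<in> U" "w \<in> U" "y = p u" "z = p w" by blast
    then show "\<phi> (madd P y z) = madd N (\<phi> y) (\<phi> z)"
      using \<phi> U(3) f(2) p(2) by (simp flip: \<phi>)
  next
    fix y a assume "y \<in> p ` U"
    then obtain u where "u \<in> U" "y = p u" by blast
    then show "\<phi> (msmul P y a) = msmul N (\<phi> y) a"
      using \<phi> U(4) f(3) p(3) by (simp flip: \<phi>)
  qed
  then show ?thesis using \<phi> by (intro exI[of _ \<phi>]) simp
qed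

section \<open>Injectivity relative to projective modules\<close>

lemma free_mod_simps [simp]:
  "mcarrier (free_mod n) = {v. \<forall>i\<ge>n. v i = 0}"
  "madd (free_mod n) = (\<lambda>v w i. v i + w i)"
  "mzero (free_mod n) = (\<lambda>i. 0)"
  "msmul (free_mod n) = (\<lambda>v a i. v i * a)"
  by (simp_all add: free_mod_def)

lemma regA_simps [simp]:
  "mcarrier regA = UNIV" "madd regA = (+)" "mzero regA = 0" "msmul regA = (*)"
  by (simp_all add: regA_def ideal_mod_def)

lemma right_module_free_mod: "right_module (free_mod n)"
proof
  show "rmodule (free_mod n)"
    unfolding rmodule_def
  proof (intro conjI ballI allI)
    fix v assume "v \<in> mcarrier (free_mod n)"
    then show "\<exists>w\<in>mcarrier (free_mod n). madd (free_mod n) v w = mzero (free_mod n)"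
      by (intro bexI[of _ "\<lambda>i. - v i"]) auto
  qed (simp_all add: fun_eq_iff add.assoc add.commute mult.assoc distrib_left distrib_right)
qed

lemma right_module_regA: "right_module regA"
proof
  have "\<exists>y::'a. x + y = 0" for x :: 'a
    by (rule exI[of _ "- x"]) simp
  then show "rmodule (regA :: ('a, 'a) rmod)"
    unfolding rmodule_def by (simp add: algebra_simps)
qed

lemma right_ideal_iff_submodule_regA: "right_ideal I \<longleftrightarrow> submodule regA I"
  unfolding right_ideal_def submodule_def by simp

lemma rhom_ideal_mod_iff_linear_on: "rhom (ideal_mod I) N f \<longleftrightarrow> linear_on regA N I f"
  unfolding rhom_def linear_on_def by (simp add: ideal_mod_def image_subset_iff)

lemma linear_on_free_mod_iff: "linear_on (free_mod m) N U f \<longleftrightarrow> linear_on (free_mod k) N U f"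
  unfolding linear_on_def by simp

lemma rhom_free_mod_truncate: "rhom (free_mod (Suc m)) (free_mod m) (\<lambda>v. v(m := 0))"
  unfolding rhom_def by (auto simp: fun_eq_iff le_Suc_eq)

lemma rhom_free_mod_coordinate: "rhom (free_mod n) regA (\<lambda>v. v m)"
  unfolding rhom_def by simp

lemma injective_extend_free_step:
  fixes Z :: "('a::ring_1, 'z) rmod"
  assumes Z: "right_module Z" "injective Z"
    and U: "submodule (free_mod (Suc m)) U" and g: "linear_on (free_mod (Suc m)) Z U g"
    and h': "rhom (free_mod m) Z h'" and h'_eq: "\<And>u. u \<in> U \<Longrightarrow> u m = 0 \<Longrightarrow> h' u = g u"
  shows "\<exists>h. rhom (free_mod (Suc m)) Z h \<and> (\<forall>u\<in>U. h u = g u)"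
proof -
  interpret Z: right_module Z by (fact Z(1))
  have h'_trunc: "rhom (free_mod (Suc m)) Z (\<lambda>v. h' (v(m := 0)))"
    by (fact rhom_comp[OF rhom_free_mod_truncate h'])
  \<comment> \<open>D vanishes where the last coordinate does, so it factors through that coordinate,
    i.e. through a map on a right ideal, which Baer's criterion extends to all of A.\<close>
  define D where "D u = madd Z (g u) (msmul Z (h' (u(m := 0))) (-1))" for u
  have UM: "U \<subseteq> mcarrier (free_mod (Suc m))" using submoduleD(1)[OF U] .
  have "linear_on (free_mod (Suc m)) Z U (\<lambda>u. h' (u(m := 0)))"
    using h'_trunc UM unfolding rhom_iff_linear_on by (rule linear_on_subset)
  then have D: "linear_on (free_mod (Suc m)) Z U D"
    unfolding D_def by (intro Z.linear_on_add Z.linear_on_neg g)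
  have D_vanishes: "D u = mzero Z" if "u \<in> U" "u m = mzero regA" for u
    using that h'_eq linear_onD(1)[OF g] by (simp add: D_def fun_upd_idem)
  have "linear_on (free_mod (Suc m)) regA U (\<lambda>u. u m)"
    using rhom_free_mod_coordinate UM unfolding rhom_iff_linear_on by (rule linear_on_subset)
  from linear_on_factor[OF right_module_free_mod Z(1) right_module_regA U D this D_vanishes]
  obtain \<phi> where \<phi>: "linear_on regA Z ((\<lambda>u. u m) ` U) \<phi>" "\<forall>u\<in>U. D u = \<phi> (u m)"
    by blast
  have "right_ideal ((\<lambda>u. u m) ` U)"
    unfolding right_ideal_iff_submodule_regA
    by (rule submodule_image[OF right_module_free_mod right_module_regA U]) fact
  then obtain H where H: "rhom regA Z H" "\<forall>a\<in>(\<lambda>u. u m) ` U. H a = \<phi> a"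
    using Z(2) \<phi>(1) unfolding injective_def rhom_ideal_mod_iff_linear_on by blast
  define h where "h v = madd Z (h' (v(m := 0))) (H (v m))" for v
  have "rhom (free_mod (Suc m)) Z h"
    unfolding h_def rhom_iff_linear_on
    using h'_trunc rhom_comp[OF rhom_free_mod_coordinate H(1)]
    by (intro Z.linear_on_add) (simp_all add: rhom_iff_linear_on)
  moreover have "h u = g u" if "u \<in> U" for u
  proof -
    have "h u = madd Z (h' (u(m := 0))) (D u)" unfolding h_def using H(2) \<phi>(2) that by simp
    also have "\<dots> = g u"
    proof -
      have "u \<in> mcarrier (free_mod (Suc m))" using UM that by blast
      then have "h' (u(m := 0)) \<in> mcarrier Z" using h'_trunc unfolding rhom_def by blast
      then show ?thesis unfolding D_def by (simp add: Z.add_neg_cancel_left linear_onD(1)[OF g that])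
    qed
    finally show ?thesis .
  qed
  ultimately show ?thesis by blast
qed

lemma injective_extend_free:
  fixes Z :: "('a::ring_1, 'z) rmod"
  assumes Z: "right_module Z" "injective Z"
  shows "submodule (free_mod m) U \<Longrightarrow> linear_on (free_mod m) Z U g \<Longrightarrow>
    \<exists>h. rhom (free_mod m) Z h \<and> (\<forall>u\<in>U. h u = g u)"
proof (induction m arbitrary: U g)
  case 0
  have "g u = mzero Z" if "u \<in> U" for u
  proof -
    have "u = mzero (free_mod 0)" using that submoduleD(1)[OF "0.prems"(1)] by auto
    moreover have "mzero (free_mod 0) \<in> U" using submoduleD(2)[OF "0.prems"(1)] .
    ultimately show ?thesis using linear_on_zero[OF right_module_free_mod Z(1) "0.prems"(2)] by simp
  qed
  moreover have "rhom (free_mod 0) Z (\<lambda>_. mzero Z)"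
    using right_module.zero_closed[OF Z(1)] right_module.add_zero_right[OF Z(1)]
      right_module.smul_zero_left[OF Z(1)] by (auto simp: rhom_def)
  ultimately show ?case by auto
next
  case (Suc m)
  let ?U' = "{u \<in> U. u m = 0}"
  have "u i = 0" if "u \<in> U" "u m = 0" "m \<le> i" for u i
    using that submoduleD(1)[OF Suc.prems(1)] by (cases "i = m") auto
  then have "submodule (free_mod m) ?U'"
    using submoduleD[OF Suc.prems(1)] by (auto simp: submodule_def)
  moreover have "linear_on (free_mod m) Z ?U' g"
    unfolding linear_on_free_mod_iff[of m Z ?U' g "Suc m"]
    by (rule linear_on_subset[OF Suc.prems(2)]) blast
  ultimately have "\<exists>h'. rhom (free_mod m) Z h' \<and> (\<forall>u\<in>?U'. h' u = g u)"
    by (rule Suc.IH)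
  then obtain h' where h': "rhom (free_mod m) Z h'" and "\<And>u. u \<in> U \<Longrightarrow> u m = 0 \<Longrightarrow> h' u = g u"
    by blast
  then show ?case by (rule injective_extend_free_step[OF Z Suc.prems])
qed

lemma injective_extend_projective:
  fixes Z :: "('a::ring_1, 'z) rmod"
  assumes M: "right_module M" "projective M" and U: "submodule M U" and g: "linear_on M Z U g"
    and Z: "right_module Z" "injective Z"
  shows "\<exists>f. rhom M Z f \<and> (\<forall>x\<in>U. f x = g x)"
proof -
  obtain n i p where i: "rhom M (free_mod n) i" and p: "rhom (free_mod n) M p"
    and pi: "\<forall>x\<in>mcarrier M. p (i x) = x"
    using M(2) unfolding projective_def by blast
  have UM: "U \<subseteq> mcarrier M" using submoduleD(1)[OF U] .
  have "submodule (free_mod n) (i ` U)"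
    using submodule_image[OF M(1) right_module_free_mod U] linear_on_subset[OF i[unfolded rhom_iff_linear_on] UM] .
  moreover have "linear_on (free_mod n) Z (i ` U) (\<lambda>u. g (p u))"
  proof (rule linear_on_comp[OF _ _ g])
    have "i ` U \<subseteq> mcarrier (free_mod n)" using i UM by (auto simp: rhom_def)
    then show "linear_on (free_mod n) M (i ` U) p"
      by (rule linear_on_subset[OF p[unfolded rhom_iff_linear_on]])
    show "p ` i ` U \<subseteq> U" using pi UM by auto
  qed
  ultimately obtain h where h: "rhom (free_mod n) Z h" "\<forall>u\<in>i ` U. h u = g (p u)"
    using injective_extend_free[OF Z] by blast
  have "rhom M Z (\<lambda>x. h (i x))" by (fact rhom_comp[OF i h(1)])
  moreover have "\<forall>x\<in>U. h (i x) = g x" using h(2) pi UM by auto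
  ultimately show ?thesis by blast
qed

section \<open>Quotient modules\<close>

lemma quot_mod_simps [simp]:
  "mcarrier (quot_mod M K N) = coset M N ` K"
  "madd (quot_mod M K N) = (\<lambda>X Y. {madd M x y | x y. x \<in> X \<and> y \<in> Y})"
  "mzero (quot_mod M K N) = coset M N (mzero M)"
  "msmul (quot_mod M K N) = (\<lambda>X a. {madd M (msmul M x a) n | x n. x \<in> X \<and> n \<in> N})"
  by (simp_all add: quot_mod_def)

context right_module
begin

lemma coset_add:
  assumes B: "submodule M B" and x: "x \<in> mcarrier M" and y: "y \<in> mcarrier M"
  shows "madd (quot_mod M K B) (coset M B x) (coset M B y) = coset M B (madd M x y)"
  unfolding coset_def quot_mod_simps
proof (intro equalityI subsetI)
  note B = submoduleD[OF B]
  fix z assume "z \<in> {madd M x' y' |x' y'. x' \<in> {madd M x b |b. b \<in> B} \<and> y' \<in> {madd M y b |b. b \<in> B}}"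
  then obtain b b' where b: "b \<in> B" "b' \<in> B" and z: "z = madd M (madd M x b) (madd M y b')"
    by blast
  have "z = madd M (madd M x y) (madd M b b')"
    unfolding z using b x y B(1) by (auto intro: add_add_swap)
  then show "z \<in> {madd M (madd M x y) b |b. b \<in> B}" using B(3)[OF b] by blast
next
  note B = submoduleD[OF B]
  fix z assume "z \<in> {madd M (madd M x y) b |b. b \<in> B}"
  then obtain b where b: "b \<in> B" and z: "z = madd M (madd M x y) b" by blast
  have "z = madd M (madd M x b) (madd M y (mzero M))"
    unfolding z using b x y B(1) add_add_swap[of x y b "mzero M"] by auto
  then show "z \<in> {madd M x' y' |x' y'. x' \<in> {madd M x b |b. b \<in> B} \<and> y' \<in> {madd M y b |b. b \<in> B}}"
    using b B(2) by blast
qed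

lemma coset_smul:
  assumes B: "submodule M B" and x: "x \<in> mcarrier M"
  shows "msmul (quot_mod M K B) (coset M B x) a = coset M B (msmul M x a)"
  unfolding coset_def quot_mod_simps
proof (intro equalityI subsetI)
  note B = submoduleD[OF B]
  fix z assume "z \<in> {madd M (msmul M x' a) b' |x' b'. x' \<in> {madd M x b |b. b \<in> B} \<and> b' \<in> B}"
  then obtain b b' where b: "b \<in> B" "b' \<in> B" and z: "z = madd M (msmul M (madd M x b) a) b'"
    by blast
  have "b \<in> mcarrier M" "b' \<in> mcarrier M" using b B(1) by auto
  then have "z = madd M (msmul M x a) (madd M (msmul M b a) b')"
    unfolding z using x by (simp add: smul_add_left add_assoc)
  then show "z \<in> {madd M (msmul M x a) b |b. b \<in> B}" using B(3)[OF B(4)[OF b(1)] b(2)] by blast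
next
  note B = submoduleD[OF B]
  fix z assume "z \<in> {madd M (msmul M x a) b |b. b \<in> B}"
  then obtain b where b: "b \<in> B" and z: "z = madd M (msmul M x a) b" by blast
  have "z = madd M (msmul M (madd M x (mzero M)) a) b" unfolding z using x by simp
  then show "z \<in> {madd M (msmul M x' a) b' |x' b'. x' \<in> {madd M x b |b. b \<in> B} \<and> b' \<in> B}"
    using b B(2) by blast
qed

lemma coset_of_member:
  assumes B: "submodule M B" and b: "b \<in> B"
  shows "coset M B b = coset M B (mzero M)"
proof -
  note B = submoduleD[OF B]
  have "coset M B (mzero M) = B" unfolding coset_def using B(1) by (force simp: subset_iff)
  moreover have "coset M B b = B"
  proof
    show "coset M B b \<subseteq> B" unfolding coset_def using B(3) b by auto
    show "B \<subseteq> coset M B b"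
    proof
      fix z assume z: "z \<in> B"
      have "z = madd M b (madd M z (msmul M b (-1)))"
        using add_neg_cancel_left subsetD[OF B(1) b] subsetD[OF B(1) z] by simp
      then show "z \<in> coset M B b" unfolding coset_def using B(3,4) z b by blast
    qed
  qed
  ultimately show ?thesis by simp
qed

end

lemma hom_zero_quot_modI:
  assumes M: "right_module M" and N: "right_module N"
    and K: "submodule M K" and B: "submodule M B" "B \<subseteq> K"
    and vanish: "\<And>f. linear_on M N K f \<Longrightarrow> \<forall>b\<in>B. f b = mzero N \<Longrightarrow> \<forall>x\<in>K. f x = mzero N"
  shows "hom_zero (quot_mod M K B) N"
  unfolding hom_zero_def
proof (intro allI impI ballI)
  fix g X assume g: "rhom (quot_mod M K B) N g" and X: "X \<in> mcarrier (quot_mod M K B)"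
  interpret M: right_module M by (fact M)
  define f where "f x = g (coset M B x)" for x
  have KM: "K \<subseteq> mcarrier M" using submoduleD(1)[OF K] .
  note g = linear_onD[OF g[unfolded rhom_iff_linear_on]]
  have coset: "coset M B x \<in> mcarrier (quot_mod M K B)" if "x \<in> K" for x
    using that by simp
  have f: "linear_on M N K f"
    unfolding linear_on_def
  proof (intro conjI ballI allI)
    fix x assume "x \<in> K"
    then show "f x \<in> mcarrier N" unfolding f_def using g(1) coset by blast
  next
    fix x y assume x: "x \<in> K" and y: "y \<in> K"
    have "f (madd M x y) = g (madd (quot_mod M K B) (coset M B x) (coset M B y))"
      unfolding f_def using M.coset_add[OF B(1)] subsetD[OF KM x] subsetD[OF KM y] by simp
    also have "\<dots> = madd N (f x) (f y)" unfolding f_def using g(2) coset x y by blast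
    finally show "f (madd M x y) = madd N (f x) (f y)" .
  next
    fix x a assume x: "x \<in> K"
    have "f (msmul M x a) = g (msmul (quot_mod M K B) (coset M B x) a)"
      unfolding f_def using M.coset_smul[OF B(1)] subsetD[OF KM x] by simp
    also have "\<dots> = msmul N (f x) a" unfolding f_def using g(3) coset x by blast
    finally show "f (msmul M x a) = msmul N (f x) a" .
  qed
  have "f b = mzero N" if "b \<in> B" for b
    using linear_on_zero[OF M N f submoduleD(2)[OF K]] M.coset_of_member[OF B(1) that]
    unfolding f_def by simp
  then have "\<forall>x\<in>K. f x = mzero N" using vanish[OF f] by blast
  then show "g X = mzero N" using X unfolding f_def by auto
qed

section \<open>Complexes of projective modules\<close>

lemma proj_complexD:
  assumes "proj_complex F d"
  shows "right_module (F k)" "projective (F k)" "rhom (F k) (F (k + 1)) (d k)"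
    "x \<in> mcarrier (F k) \<Longrightarrow> d (k + 1) (d k x) = mzero (F (k + 2))"
  using assms by (auto simp: proj_complex_def modA_def right_module_def)

lemma submodule_cycles: "proj_complex F d \<Longrightarrow> submodule (F k) (cycles F d k)"
  unfolding cycles_def by (intro submodule_kernel proj_complexD)

lemma submodule_boundaries:
  assumes F: "proj_complex F d"
  shows "submodule (F k) (boundaries F d k)"
proof -
  have "linear_on (F (k - 1)) (F k) (mcarrier (F (k - 1))) (d (k - 1))"
    using proj_complexD(3)[OF F, where k = "k - 1"] by (simp add: rhom_iff_linear_on)
  then show ?thesis
    unfolding boundaries_def
    by (rule submodule_image[OF proj_complexD(1)[OF F] proj_complexD(1)[OF F]
          submodule_carrier[OF proj_complexD(1)[OF F]]])
qed

lemma boundaries_subset_cycles: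
  assumes F: "proj_complex F d"
  shows "boundaries F d k \<subseteq> cycles F d k"
proof
  fix y assume "y \<in> boundaries F d k"
  then obtain x where x: "x \<in> mcarrier (F (k - 1))" and y: "y = d (k - 1) x"
    by (auto simp: boundaries_def)
  have "d (k - 1) x \<in> mcarrier (F k)"
    using proj_complexD(3)[OF F, where k = "k - 1"] x by (auto simp: rhom_def)
  moreover have "d k (d (k - 1) x) = mzero (F (k + 1))"
    using proj_complexD(4)[OF F x] by (simp add: add.commute)
  ultimately show "y \<in> cycles F d k" unfolding cycles_def y by simp
qed

lemma rhom_free_mod_tuple:
  "(\<And>j. rhom M regA (\<Psi> j)) \<Longrightarrow> rhom M (free_mod n) (\<lambda>y j. if j < n then \<Psi> j y else 0)"
  unfolding rhom_def by (auto simp: fun_eq_iff)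

lemma dual_homology_vanishes_projective:
  fixes F :: "int \<Rightarrow> ('a::ring_1, 'f) rmod" and Z :: "('a, 'z) rmod"
  assumes dv: "dual_homology_vanishes F d k" and Z: "right_module Z" "projective Z"
    and f: "rhom (F k) Z f" and f_vanishes: "\<forall>x\<in>mcarrier (F (k - 1)). f (d (k - 1) x) = mzero Z"
  shows "\<exists>\<psi>. rhom (F (k + 1)) Z \<psi> \<and> (\<forall>x\<in>mcarrier (F k). f x = \<psi> (d k x))"
proof -
  obtain n i p where i: "rhom Z (free_mod n) i" and p: "rhom (free_mod n) Z p"
    and pi: "\<forall>z\<in>mcarrier Z. p (i z) = z"
    using Z(2) unfolding projective_def by blast
  have i_zero: "i (mzero Z) = (\<lambda>j. 0)"
    using linear_on_zero[OF Z(1) right_module_free_mod i[unfolded rhom_iff_linear_on]]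
    by (simp add: right_module.zero_closed[OF Z(1)])
  have "\<forall>j. \<exists>\<psi>. rhom (F (k + 1)) regA \<psi> \<and> (\<forall>x\<in>mcarrier (F k). i (f x) j = \<psi> (d k x))"
    (is "\<forall>j. ?lifts j")
  proof
    fix j
    have "rhom (F k) regA (\<lambda>x. i (f x) j)" using rhom_comp[OF f i] unfolding rhom_def by auto
    moreover have "\<forall>x\<in>mcarrier (F (k - 1)). i (f (d (k - 1) x)) j = 0" using f_vanishes i_zero by simp
    ultimately show "?lifts j" using dv unfolding dual_homology_vanishes_def by blast
  qed
  from choice[OF this] obtain \<Psi> where "\<forall>j. rhom (F (k + 1)) regA (\<Psi> j) \<and>
      (\<forall>x\<in>mcarrier (F k). i (f x) j = \<Psi> j (d k x))"
    by blast
  then have \<Psi>: "\<And>j. rhom (F (k + 1)) regA (\<Psi> j)"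
    and \<Psi>_eq: "\<And>j x. x \<in> mcarrier (F k) \<Longrightarrow> i (f x) j = \<Psi> j (d k x)"
    by blast+
  define \<psi> where "\<psi> y = p (\<lambda>j. if j < n then \<Psi> j y else 0)" for y
  have "rhom (F (k + 1)) Z \<psi>"
    unfolding \<psi>_def by (fact rhom_comp[OF rhom_free_mod_tuple[OF \<Psi>] p])
  moreover have "f x = \<psi> (d k x)" if x: "x \<in> mcarrier (F k)" for x
  proof -
    have fx: "f x \<in> mcarrier Z" using f x by (auto simp: rhom_def)
    then have "i (f x) = (\<lambda>j. if j < n then \<Psi> j (d k x) else 0)"
      using i \<Psi>_eq[OF x] by (auto simp: rhom_def fun_eq_iff)
    moreover have "f x = p (i (f x))" using pi fx by simp
    ultimately show ?thesis unfolding \<psi>_def by simp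
  qed
  ultimately show ?thesis by blast
qed

lemma cycle_functional_vanishes:
  fixes Z :: "('a::ring_1, 'z) rmod"
  assumes F: "proj_complex F d" "dual_homology_vanishes F d n"
    and Z: "right_module Z" "projective Z" "injective Z"
    and f: "linear_on (F n) Z (cycles F d n) f" and f_vanishes: "\<forall>b\<in>boundaries F d n. f b = mzero Z"
  shows "\<forall>x\<in>cycles F d n. f x = mzero Z"
proof
  fix x assume x: "x \<in> cycles F d n"
  obtain f' where f': "rhom (F n) Z f'" and f'_eq: "\<forall>x\<in>cycles F d n. f' x = f x"
    using injective_extend_projective[OF proj_complexD(1,2)[OF F(1)] submodule_cycles[OF F(1)] f Z(1,3)]
    by blast
  have "\<forall>y\<in>mcarrier (F (n - 1)). f' (d (n - 1) y) = mzero Z"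
  proof
    fix y assume "y \<in> mcarrier (F (n - 1))"
    then have "d (n - 1) y \<in> boundaries F d n" by (simp add: boundaries_def)
    then show "f' (d (n - 1) y) = mzero Z"
      using f'_eq f_vanishes subsetD[OF boundaries_subset_cycles[OF F(1)]] by simp
  qed
  then obtain \<psi> where \<psi>: "rhom (F (n + 1)) Z \<psi>"
    and f'_factor: "\<forall>y\<in>mcarrier (F n). f' y = \<psi> (d n y)"
    using dual_homology_vanishes_projective[OF F(2) Z(1,2) f'] by blast
  have "f x = \<psi> (d n x)" using x f'_eq f'_factor by (auto simp: cycles_def)
  also have "\<dots> = \<psi> (mzero (F (n + 1)))" using x by (simp add: cycles_def)
  also have "\<dots> = mzero Z"
    using linear_on_zero[OF proj_complexD(1)[OF F(1)] Z(1) \<psi>[unfolded rhom_iff_linear_on]]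
    by (simp add: right_module.zero_closed[OF proj_complexD(1)[OF F(1)]])
  finally show "f x = mzero Z" .
qed

theorem mainTheorem1:
  fixes \<phi> :: "'k::field \<Rightarrow> 'a::ring_1"
    and F :: "int \<Rightarrow> ('a, 'f) rmod" and d :: "int \<Rightarrow> 'f \<Rightarrow> 'f"
    and Z :: "('a, 'z) rmod" and n :: int
  assumes "fd_algebra \<phi>"
    and "no_semisimple_summand TYPE('a)"
    and "in_L F d"
    and "proj_inj Z"
  shows "hom_zero (cohom F d n) Z"
proof -
  have F: "proj_complex F d" and exact: "\<And>k. k < 0 \<Longrightarrow> cycles F d k \<subseteq> boundaries F d k"
    and dual: "\<And>k. k \<ge> 0 \<Longrightarrow> dual_homology_vanishes F d k"
    using assms(3) by (auto simp: in_L_def)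
  have Z: "right_module Z" "projective Z" "injective Z"
    using assms(4) by (auto simp: proj_inj_def modA_def right_module_def)
  show ?thesis
    unfolding cohom_def
  proof (rule hom_zero_quot_modI[OF proj_complexD(1)[OF F] Z(1) submodule_cycles[OF F]
        submodule_boundaries[OF F] boundaries_subset_cycles[OF F]])
    fix f assume "linear_on (F n) Z (cycles F d n) f" "\<forall>b\<in>boundaries F d n. f b = mzero Z"
    then show "\<forall>x\<in>cycles F d n. f x = mzero Z"
      using exact[of n] cycle_functional_vanishes[OF F dual[of n] Z] by (cases "n < 0") auto
  qed
qed

end
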